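(* Fix an integer $k\ge 2$ and constants $\alpha>0$, $0<p<1$, and let $\tau=\frac1{1-p}$, $r_{cr}=\frac{1}{\ln\tau}$. Suppose $k<\frac{\tau\ln\tau}{\tau-1}$. Then there exists $r_0<r_{cr}$ such that for every $r\in(r_0,r_{cr})$, the number $X$ of solutions of a random instance of Model RB with parameters $(n,\alpha,r,k,p)$ satisfies $\mathbb{E}[X]^2/\mathbb{E}[X^2]=o(1)$ as $n\to\infty$.
   Context: Model RB with parameters $(n,\alpha,r,k,p)$, where $n$ is the number of variables, $\alpha>0$, $r>0$, $k\ge 2$ an integer and $0<p<1$: there are $n$ variables $x_1,\dots,x_n$, each with the same domain $D$ of size $d=n^{\alpha}$ (treated as an integer). A random instance is generated as follows: (1) select, independently with repetition, $t=rn\ln d$ constraints, the scope of each being a set of $k$ distinct variables chosen uniformly at random among the $n$ variables; (2) for each constraint, select uniformly at random without repetition a set of $q=p\,d^{k}$ "incompatible" tuples from $D^{k}$. An assignment to all variables is a solution if for every constraint the tuple of values of its scope is not incompatible. Limits are as $n\to\infty$ with $\alpha,r,k,p$ fixed. *)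

theory Defs
  imports "HOL-Probability.Probability"
begin

text \<open>Model RB.  Variables are 0..n-1, the domain is {0..<d}.
  Non-integer quantities are rounded down: d = floor(n powr alpha),
  t = floor(r n ln d), q = floor(p d^k).\<close>

definition rb_d :: "nat \<Rightarrow> real \<Rightarrow> nat" where
  "rb_d n \<alpha> = nat \<lfloor>real n powr \<alpha>\<rfloor>"

definition rb_t :: "nat \<Rightarrow> real \<Rightarrow> real \<Rightarrow> nat" where
  "rb_t n \<alpha> r = nat \<lfloor>r * real n * ln (real (rb_d n \<alpha>))\<rfloor>"

definition rb_q :: "nat \<Rightarrow> real \<Rightarrow> nat \<Rightarrow> real \<Rightarrow> nat" where
  "rb_q n \<alpha> k p = nat \<lfloor>p * real (rb_d n \<alpha>) ^ k\<rfloor>"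

definition rb_tuples :: "nat \<Rightarrow> nat \<Rightarrow> nat list set" where
  "rb_tuples d k = {xs. length xs = k \<and> set xs \<subseteq> {..<d}}"

text \<open>Scopes: k distinct variables (as an ordered list; choosing a uniformly random
  ordered k-tuple of distinct variables is the same as a uniform k-set together with
  an ordering used to read the tuples).\<close>
definition rb_scopes :: "nat \<Rightarrow> nat \<Rightarrow> nat list set" where
  "rb_scopes n k = {xs. distinct xs \<and> length xs = k \<and> set xs \<subseteq> {..<n}}"

text \<open>A constraint: a scope and a set of incompatible tuples.\<close>
type_synonym rb_constraint = "nat list \<times> nat list set"

definition rb_constraint_pmf :: "nat \<Rightarrow> real \<Rightarrow> nat \<Rightarrow> real \<Rightarrow> rb_constraint pmf" where
  "rb_constraint_pmf n \<alpha> k p =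
     pair_pmf (pmf_of_set (rb_scopes n k))
              (pmf_of_set {R. R \<subseteq> rb_tuples (rb_d n \<alpha>) k \<and> card R = rb_q n \<alpha> k p})"

definition rb_instance :: "nat \<Rightarrow> real \<Rightarrow> real \<Rightarrow> nat \<Rightarrow> real \<Rightarrow> (nat \<Rightarrow> rb_constraint) pmf" where
  "rb_instance n \<alpha> r k p =
     Pi_pmf {..<rb_t n \<alpha> r} ([], {}) (\<lambda>_. rb_constraint_pmf n \<alpha> k p)"

definition rb_solutions :: "nat \<Rightarrow> nat \<Rightarrow> nat \<Rightarrow> (nat \<Rightarrow> rb_constraint) \<Rightarrow> (nat \<Rightarrow> nat) set" where
  "rb_solutions n d t I =
     {\<sigma> \<in> {..<n} \<rightarrow>\<^sub>E {..<d}. \<forall>i<t. map \<sigma> (fst (I i)) \<notin> snd (I i)}"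

definition rb_X :: "nat \<Rightarrow> real \<Rightarrow> real \<Rightarrow> (nat \<Rightarrow> rb_constraint) \<Rightarrow> real" where
  "rb_X n \<alpha> r I = real (card (rb_solutions n (rb_d n \<alpha>) (rb_t n \<alpha> r) I))"

definition rb_EX :: "nat \<Rightarrow> real \<Rightarrow> real \<Rightarrow> nat \<Rightarrow> real \<Rightarrow> real" where
  "rb_EX n \<alpha> r k p = measure_pmf.expectation (rb_instance n \<alpha> r k p) (\<lambda>I. rb_X n \<alpha> r I)"

definition rb_EX2 :: "nat \<Rightarrow> real \<Rightarrow> real \<Rightarrow> nat \<Rightarrow> real \<Rightarrow> real" where
  "rb_EX2 n \<alpha> r k p = measure_pmf.expectation (rb_instance n \<alpha> r k p) (\<lambda>I. (rb_X n \<alpha> r I)^2)"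

end

theory Submission
  imports Defs
begin

text \<open>Let \<open>P\<^sub>1\<close> and \<open>P\<^sub>2\<close> be the probabilities that a uniformly random set of \<open>q\<close> incompatible
  tuples avoids one, respectively two, given tuples of \<open>D\<^sup>k\<close>. Then \<open>E X = d\<^sup>n P\<^sub>1\<^sup>t\<close>, while the pairs
  of assignments that agree on the first \<open>m = (1 - \<epsilon>) n\<close> variables already contribute
  \<open>d\<^bsup>2n - m\<^esup> (a P\<^sub>1 + (1 - a) P\<^sub>2)\<^sup>t\<close> to \<open>E X\<^sup>2\<close>, where \<open>a \<approx> (1 - \<epsilon>)\<^sup>k\<close> is the probability that a
  random scope lies inside these variables. Hence \<open>E[X]\<^sup>2 / E[X\<^sup>2] \<le> exp (n ln d ((1 - \<epsilon>) - r ln \<Psi>))\<close>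
  for the overlap factor \<open>\<Psi> = (a P\<^sub>1 + (1 - a) P\<^sub>2) / P\<^sub>1\<^sup>2 \<rightarrow> 1 + (\<tau> - 1)(1 - \<epsilon>)\<^sup>k\<close>. The hypothesis
  on \<open>k\<close> says that \<open>ln (1 + (\<tau> - 1)(1 - \<epsilon>)\<^sup>k) - (1 - \<epsilon>) ln \<tau>\<close> has positive derivative at \<open>\<epsilon> = 0\<close>,
  so it is positive for some \<open>\<epsilon>\<close>; every \<open>r\<close> above \<open>r\<^sub>0 = (1 - \<epsilon>) / ln (1 + (\<tau> - 1)(1 - \<epsilon>)\<^sup>k) < r\<^sub>c\<^sub>r\<close>
  then makes the exponent tend to \<open>-\<infinity>\<close>.\<close>

lemma rb_tuples_eq: "rb_tuples d k = {xs. set xs \<subseteq> {..<d} \<and> length xs = k}"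
  unfolding rb_tuples_def by auto

lemma finite_rb_tuples: "finite (rb_tuples d k)"
  by (simp add: rb_tuples_eq finite_lists_length_eq)

lemma card_rb_tuples: "card (rb_tuples d k) = d ^ k"
  by (simp add: rb_tuples_eq card_lists_length_eq)

lemma finite_rb_scopes: "finite (rb_scopes n k)"
proof (rule finite_subset)
  show "rb_scopes n k \<subseteq> {xs. set xs \<subseteq> {..<n} \<and> length xs = k}"
    unfolding rb_scopes_def by auto
qed (simp add: finite_lists_length_eq)

lemma card_rb_scopes: "k \<le> n \<Longrightarrow> card (rb_scopes n k) = \<Prod>{n - k + 1..n}"
  using card_lists_distinct_length_eq[of "{..<n}" k] unfolding rb_scopes_def
  by (simp add: conj_commute conj_left_commute)

lemma rb_scopes_nonempty: "k \<le> n \<Longrightarrow> rb_scopes n k \<noteq> {}"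
  unfolding rb_scopes_def by (rule ccontr) (auto dest!: spec[of _ "[0..<k]"])

lemma rb_scopes_mono: "m \<le> n \<Longrightarrow> rb_scopes m k \<subseteq> rb_scopes n k"
  unfolding rb_scopes_def by auto

lemma rb_scopes_inside: "m \<le> n \<Longrightarrow> {xs \<in> rb_scopes n k. set xs \<subseteq> {..<m}} = rb_scopes m k"
  unfolding rb_scopes_def by auto

lemma card_rb_scopes_ratio_ge:
  assumes km: "k \<le> m" and mn: "m \<le> n"
  shows "((real m - real k + 1) / real n) ^ k \<le> card (rb_scopes m k) / card (rb_scopes n k)"
proof -
  have "(real m - real k + 1) ^ k = (\<Prod>i\<in>{m - k + 1..m}. real m - real k + 1)"
    using km by simp
  also have "\<dots> \<le> (\<Prod>i\<in>{m - k + 1..m}. real i)"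
    by (rule prod_mono) (use km in auto)
  finally have lower: "(real m - real k + 1) ^ k \<le> card (rb_scopes m k)"
    by (simp add: card_rb_scopes[OF km])
  have "card (rb_scopes n k) = (\<Prod>i\<in>{n - k + 1..n}. real i)"
    using km mn by (simp add: card_rb_scopes)
  also have "\<dots> \<le> (\<Prod>i\<in>{n - k + 1..n}. real n)"
    by (rule prod_mono) auto
  finally have upper: "card (rb_scopes n k) \<le> real n ^ k"
    using km mn by simp
  have "0 < card (rb_scopes n k)"
    using km mn finite_rb_scopes rb_scopes_nonempty by (simp add: card_gt_0_iff)
  then show ?thesis
    unfolding power_divide by (intro frac_le lower upper) simp_all
qed

definition avoid_prob :: "nat \<Rightarrow> nat \<Rightarrow> nat \<Rightarrow> real" where
  "avoid_prob N s q = real (N - s choose q) / real (N choose q)"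

lemma finite_subsets_card: "finite U \<Longrightarrow> finite {R. R \<subseteq> U \<and> card R = q}"
  by (auto intro: finite_subset[of _ "Pow U"])

lemma subsets_card_nonempty:
  assumes "finite U" "q \<le> card U"
  shows "{R. R \<subseteq> U \<and> card R = q} \<noteq> {}"
proof -
  have "0 < card {R. R \<subseteq> U \<and> card R = q}"
    using n_subsets[of U q] assms by simp
  then show ?thesis
    using card_gt_0_iff by blast
qed

lemma prob_uniform_subset_avoids:
  assumes U: "finite U" and S: "S \<subseteq> U" and q: "q \<le> card U"
  shows "measure_pmf.prob (pmf_of_set {R. R \<subseteq> U \<and> card R = q}) {R. R \<inter> S = {}}
           = avoid_prob (card U) (card S) q"
proof -
  have "{R. R \<subseteq> U \<and> card R = q} \<inter> {R. R \<inter> S = {}} = {R. R \<subseteq> U - S \<and> card R = q}"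
    by auto
  moreover have "card {R. R \<subseteq> U - S \<and> card R = q} = card U - card S choose q"
    using n_subsets[of "U - S" q] U S by (simp add: card_Diff_subset finite_subset)
  ultimately show ?thesis
    unfolding avoid_prob_def measure_pmf_of_set[OF subsets_card_nonempty[OF U q] finite_subsets_card[OF U]]
    by (simp add: n_subsets U)
qed

lemma avoid_prob_antimono: "s \<le> s' \<Longrightarrow> avoid_prob N s' q \<le> avoid_prob N s q"
  unfolding avoid_prob_def by (intro divide_right_mono) (auto intro: binomial_right_mono)

lemma avoid_prob_one:
  assumes "q \<le> N"
  shows "avoid_prob N 1 q = 1 - real q / real N"
proof (cases "N = 0")
  case False
  have "real (N - q) * real (N choose q) = real N * real (N - 1 choose q)"
    by (metis binomial_absorb_comp of_nat_mult)
  with assms False show ?thesis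
    unfolding avoid_prob_def by (simp add: field_simps)
qed (use assms in \<open>simp add: avoid_prob_def\<close>)

lemma avoid_prob_Suc:
  assumes "q < N"
  shows "avoid_prob N (Suc s) q = avoid_prob N 1 q * avoid_prob (N - 1) s q"
proof -
  have "0 < real (N - 1 choose q)" "0 < real (N choose q)"
    using assms by simp_all
  moreover have "N - Suc s = N - 1 - s"
    by simp
  ultimately show ?thesis
    unfolding avoid_prob_def by simp
qed

lemma avoid_prob_mix_nonneg:
  "0 \<le> a \<Longrightarrow> a \<le> 1 \<Longrightarrow> 0 \<le> a * avoid_prob N 1 q + (1 - a) * avoid_prob N 2 q"
  by (simp add: avoid_prob_def)

lemma avoid_prob_mix_mono:
  assumes "a \<le> a'"
  shows "a * avoid_prob N 1 q + (1 - a) * avoid_prob N 2 q \<le> a' * avoid_prob N 1 q + (1 - a') * avoid_prob N 2 q"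
proof -
  have "0 \<le> (a' - a) * (avoid_prob N 1 q - avoid_prob N 2 q)"
    using assms avoid_prob_antimono[of 1 2 N q] by simp
  then show ?thesis
    by (simp add: algebra_simps)
qed

definition overlap_factor :: "real \<Rightarrow> nat \<Rightarrow> nat \<Rightarrow> real" where
  "overlap_factor a N q = (a * avoid_prob N 1 q + (1 - a) * avoid_prob N 2 q) / avoid_prob N 1 q ^ 2"

definition satisfies :: "(nat \<Rightarrow> nat) \<Rightarrow> rb_constraint \<Rightarrow> bool" where
  "satisfies \<sigma> c \<longleftrightarrow> map \<sigma> (fst c) \<notin> snd c"

definition constraint_pmf :: "nat \<Rightarrow> nat \<Rightarrow> nat \<Rightarrow> nat \<Rightarrow> rb_constraint pmf" where
  "constraint_pmf n d k q =
     pair_pmf (pmf_of_set (rb_scopes n k)) (pmf_of_set {R. R \<subseteq> rb_tuples d k \<and> card R = q})"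

definition instance_pmf :: "nat \<Rightarrow> nat \<Rightarrow> nat \<Rightarrow> nat \<Rightarrow> nat \<Rightarrow> (nat \<Rightarrow> rb_constraint) pmf" where
  "instance_pmf n d k q t = Pi_pmf {..<t} ([], {}) (\<lambda>_. constraint_pmf n d k q)"

lemma rb_EX_eq_instance_pmf:
  "rb_EX n \<alpha> r k p = measure_pmf.expectation (instance_pmf n (rb_d n \<alpha>) k (rb_q n \<alpha> k p) (rb_t n \<alpha> r))
     (\<lambda>I. real (card (rb_solutions n (rb_d n \<alpha>) (rb_t n \<alpha> r) I)))"
  unfolding rb_EX_def rb_instance_def rb_constraint_pmf_def rb_X_def instance_pmf_def constraint_pmf_def ..

lemma rb_EX2_eq_instance_pmf:
  "rb_EX2 n \<alpha> r k p = measure_pmf.expectation (instance_pmf n (rb_d n \<alpha>) k (rb_q n \<alpha> k p) (rb_t n \<alpha> r))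
     (\<lambda>I. real (card (rb_solutions n (rb_d n \<alpha>) (rb_t n \<alpha> r) I)) ^ 2)"
  unfolding rb_EX2_def rb_instance_def rb_constraint_pmf_def rb_X_def instance_pmf_def constraint_pmf_def ..

lemma prob_pair_pmf_of_set:
  assumes A: "finite A" "A \<noteq> {}" and B: "finite B" "B \<noteq> {}"
  shows "measure_pmf.prob (pair_pmf (pmf_of_set A) (pmf_of_set B)) E
     = (\<Sum>a\<in>A. measure_pmf.prob (pmf_of_set B) {b. (a, b) \<in> E}) / card A"
proof -
  have pair: "pair_pmf (pmf_of_set A) (pmf_of_set B) = pmf_of_set (A \<times> B)"
    by (rule pmf_eqI) (auto simp: pmf_pair assms card_cartesian_product indicator_def)
  have "(A \<times> B) \<inter> E = Sigma A (\<lambda>a. B \<inter> {b. (a, b) \<in> E})"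
    by auto
  then have "card ((A \<times> B) \<inter> E) = (\<Sum>a\<in>A. card (B \<inter> {b. (a, b) \<in> E}))"
    using A B by (simp add: card_SigmaI)
  then show ?thesis
    using A B by (simp add: pair measure_pmf_of_set card_cartesian_product sum_divide_distrib mult.commute)
qed

lemma map_in_rb_tuples:
  "\<sigma> \<in> {..<n} \<rightarrow>\<^sub>E {..<d} \<Longrightarrow> xs \<in> rb_scopes n k \<Longrightarrow> map \<sigma> xs \<in> rb_tuples d k"
  unfolding rb_scopes_def rb_tuples_def by (auto simp: PiE_def Pi_def)

lemma prob_satisfies_scope:
  assumes \<sigma>: "\<sigma> \<in> {..<n} \<rightarrow>\<^sub>E {..<d}" and \<sigma>': "\<sigma>' \<in> {..<n} \<rightarrow>\<^sub>E {..<d}"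
    and xs: "xs \<in> rb_scopes n k" and q: "q \<le> d ^ k"
  shows "measure_pmf.prob (pmf_of_set {R. R \<subseteq> rb_tuples d k \<and> card R = q})
           {R. satisfies \<sigma> (xs, R) \<and> satisfies \<sigma>' (xs, R)}
         = avoid_prob (d ^ k) (card {map \<sigma> xs, map \<sigma>' xs}) q"
proof -
  have "{R. satisfies \<sigma> (xs, R) \<and> satisfies \<sigma>' (xs, R)} = {R. R \<inter> {map \<sigma> xs, map \<sigma>' xs} = {}}"
    unfolding satisfies_def by auto
  also have "measure_pmf.prob (pmf_of_set {R. R \<subseteq> rb_tuples d k \<and> card R = q}) \<dots>
      = avoid_prob (card (rb_tuples d k)) (card {map \<sigma> xs, map \<sigma>' xs}) q"
    using map_in_rb_tuples[OF \<sigma> xs] map_in_rb_tuples[OF \<sigma>' xs] q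
    by (intro prob_uniform_subset_avoids) (auto simp: finite_rb_tuples card_rb_tuples)
  finally show ?thesis
    by (simp add: card_rb_tuples)
qed

lemma rb_relations_nonempty: "q \<le> d ^ k \<Longrightarrow> {R. R \<subseteq> rb_tuples d k \<and> card R = q} \<noteq> {}"
  using subsets_card_nonempty[OF finite_rb_tuples, of q d k] by (simp add: card_rb_tuples)

lemma prob_constraint_pmf:
  assumes "k \<le> n" "q \<le> d ^ k"
  shows "measure_pmf.prob (constraint_pmf n d k q) E
     = (\<Sum>xs\<in>rb_scopes n k. measure_pmf.prob (pmf_of_set {R. R \<subseteq> rb_tuples d k \<and> card R = q})
          {R. (xs, R) \<in> E}) / card (rb_scopes n k)"
  unfolding constraint_pmf_def
  by (rule prob_pair_pmf_of_set[OF finite_rb_scopes rb_scopes_nonempty finite_subsets_card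
        rb_relations_nonempty]) (use assms finite_rb_tuples in auto)

lemma prob_satisfies:
  assumes \<sigma>: "\<sigma> \<in> {..<n} \<rightarrow>\<^sub>E {..<d}" and kn: "k \<le> n" and q: "q \<le> d ^ k"
  shows "measure_pmf.prob (constraint_pmf n d k q) {c. satisfies \<sigma> c} = avoid_prob (d ^ k) 1 q"
proof -
  have "measure_pmf.prob (constraint_pmf n d k q) {c. satisfies \<sigma> c}
     = (\<Sum>xs\<in>rb_scopes n k. avoid_prob (d ^ k) 1 q) / card (rb_scopes n k)"
    unfolding prob_constraint_pmf[OF kn q]
    using prob_satisfies_scope[OF \<sigma> \<sigma> _ q] by (auto intro!: sum.cong)
  then show ?thesis
    using finite_rb_scopes rb_scopes_nonempty[OF kn] by simp
qed

lemma prob_satisfies_both_ge: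
  assumes \<sigma>: "\<sigma> \<in> {..<n} \<rightarrow>\<^sub>E {..<d}" and \<sigma>': "\<sigma>' \<in> {..<n} \<rightarrow>\<^sub>E {..<d}"
    and agree: "\<forall>i<m. \<sigma> i = \<sigma>' i" and km: "k \<le> m" and mn: "m \<le> n" and q: "q \<le> d ^ k"
  defines "a \<equiv> card (rb_scopes m k) / card (rb_scopes n k)"
  shows "a * avoid_prob (d ^ k) 1 q + (1 - a) * avoid_prob (d ^ k) 2 q
           \<le> measure_pmf.prob (constraint_pmf n d k q) {c. satisfies \<sigma> c \<and> satisfies \<sigma>' c}"
proof -
  let ?S = "rb_scopes n k" and ?P1 = "avoid_prob (d ^ k) 1 q" and ?P2 = "avoid_prob (d ^ k) 2 q"
  have kn: "k \<le> n"
    using km mn by simp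
  have "(\<Sum>xs\<in>?S. ?P2 + (if set xs \<subseteq> {..<m} then ?P1 - ?P2 else 0))
      \<le> (\<Sum>xs\<in>?S. avoid_prob (d ^ k) (card {map \<sigma> xs, map \<sigma>' xs}) q)"
  proof (rule sum_mono)
    fix xs assume "xs \<in> ?S"
    show "?P2 + (if set xs \<subseteq> {..<m} then ?P1 - ?P2 else 0)
        \<le> avoid_prob (d ^ k) (card {map \<sigma> xs, map \<sigma>' xs}) q"
    proof (cases "set xs \<subseteq> {..<m}")
      case True
      then have "map \<sigma> xs = map \<sigma>' xs"
        using agree by (auto simp: subset_iff)
      then have same: "{map \<sigma> xs, map \<sigma>' xs} = {map \<sigma>' xs}"
        by (simp only: insert_absorb2)
      show ?thesis
        unfolding same using True by simp
    next
      case False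
      have "card {map \<sigma> xs, map \<sigma>' xs} \<le> 2"
        by (simp add: card_insert_le_m1)
      then show ?thesis
        using False avoid_prob_antimono by simp
    qed
  qed
  also have "\<dots> = measure_pmf.prob (constraint_pmf n d k q) {c. satisfies \<sigma> c \<and> satisfies \<sigma>' c}
                   * card ?S"
    using prob_satisfies_scope[OF \<sigma> \<sigma>' _ q] finite_rb_scopes rb_scopes_nonempty[OF kn]
    by (simp add: prob_constraint_pmf[OF kn q])
  finally have "card ?S * ?P2 + card (rb_scopes m k) * (?P1 - ?P2)
      \<le> measure_pmf.prob (constraint_pmf n d k q) {c. satisfies \<sigma> c \<and> satisfies \<sigma>' c} * card ?S"
    using finite_rb_scopes
    by (simp add: sum.distrib sum.inter_filter[symmetric] rb_scopes_inside[OF mn])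
  moreover have "0 < card ?S"
    using finite_rb_scopes rb_scopes_nonempty[OF kn] by (simp add: card_gt_0_iff)
  ultimately show ?thesis
    unfolding a_def by (simp add: field_simps)
qed

lemma prob_instance_pmf_all:
  "measure_pmf.prob (instance_pmf n d k q t) {I. \<forall>i<t. P (I i)}
     = measure_pmf.prob (constraint_pmf n d k q) {c. P c} ^ t"
proof -
  have "{I. \<forall>i<t. P (I i)} = Pi {..<t} (\<lambda>_. {c. P c})"
    by (auto simp: Pi_def)
  then show ?thesis
    unfolding instance_pmf_def by (simp add: measure_Pi_pmf_Pi)
qed

lemma expectation_sum_indicator:
  "measure_pmf.expectation M (\<lambda>x. \<Sum>s\<in>A. indicator (E s) x :: real)
     = (\<Sum>s\<in>A. measure_pmf.prob M (E s))"
proof -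
  have "integrable (measure_pmf M) (indicator (E s) :: _ \<Rightarrow> real)" for s
    by (rule integrable_real_indicator) (simp_all add: less_top[symmetric])
  then show ?thesis
    by (simp add: Bochner_Integration.integral_sum)
qed

lemma rb_solutions_eq:
  "rb_solutions n d t I = {\<sigma> \<in> {..<n} \<rightarrow>\<^sub>E {..<d}. \<forall>i<t. satisfies \<sigma> (I i)}"
  unfolding rb_solutions_def satisfies_def ..

lemma card_rb_solutions_eq_sum:
  "real (card (rb_solutions n d t I))
     = (\<Sum>\<sigma>\<in>{..<n} \<rightarrow>\<^sub>E {..<d}. indicator {I. \<forall>i<t. satisfies \<sigma> (I i)} I)"
  unfolding rb_solutions_eq by (simp add: indicator_def sum.If_cases finite_PiE Int_def)

lemma card_rb_solutions_sq_eq_sum: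
  "real (card (rb_solutions n d t I)) ^ 2
     = (\<Sum>s\<in>({..<n} \<rightarrow>\<^sub>E {..<d}) \<times> ({..<n} \<rightarrow>\<^sub>E {..<d}).
          indicator {I. \<forall>i<t. satisfies (fst s) (I i) \<and> satisfies (snd s) (I i)} I)"
proof -
  have "real (card (rb_solutions n d t I)) ^ 2 = real (card (rb_solutions n d t I \<times> rb_solutions n d t I))"
    by (simp add: card_cartesian_product power2_eq_square)
  also have "rb_solutions n d t I \<times> rb_solutions n d t I
      = {s \<in> ({..<n} \<rightarrow>\<^sub>E {..<d}) \<times> ({..<n} \<rightarrow>\<^sub>E {..<d}).
           \<forall>i<t. satisfies (fst s) (I i) \<and> satisfies (snd s) (I i)}"
    unfolding rb_solutions_eq by auto
  finally show ?thesis
    by (simp add: indicator_def sum.If_cases finite_PiE Int_def)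
qed

lemma expectation_card_rb_solutions:
  assumes "k \<le> n" "q \<le> d ^ k"
  shows "measure_pmf.expectation (instance_pmf n d k q t) (\<lambda>I. real (card (rb_solutions n d t I)))
     = real d ^ n * avoid_prob (d ^ k) 1 q ^ t"
proof -
  let ?F = "{..<n} \<rightarrow>\<^sub>E {..<d}"
  have "measure_pmf.expectation (instance_pmf n d k q t) (\<lambda>I. real (card (rb_solutions n d t I)))
      = (\<Sum>\<sigma>\<in>?F. measure_pmf.prob (instance_pmf n d k q t) {I. \<forall>i<t. satisfies \<sigma> (I i)})"
    unfolding card_rb_solutions_eq_sum by (rule expectation_sum_indicator)
  also have "\<dots> = (\<Sum>\<sigma>\<in>?F. avoid_prob (d ^ k) 1 q ^ t)"
    using assms by (intro sum.cong) (simp_all add: prob_instance_pmf_all prob_satisfies)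
  finally show ?thesis
    by (simp add: card_PiE)
qed

lemma card_agreeing_pairs:
  assumes mn: "m \<le> n"
  shows "card {s \<in> ({..<n} \<rightarrow>\<^sub>E {..<d}) \<times> ({..<n} \<rightarrow>\<^sub>E {..<d}). \<forall>i<m. fst s i = snd s i}
           = d ^ n * d ^ (n - m)"
proof -
  let ?F = "{..<n} \<rightarrow>\<^sub>E {..<d}" and ?F' = "{m..<n} \<rightarrow>\<^sub>E {..<d}"
  have "bij_betw (\<lambda>(\<sigma>, \<rho>). (\<sigma>, \<lambda>i. if i < m then \<sigma> i else \<rho> i)) (?F \<times> ?F')
          {s \<in> ?F \<times> ?F. \<forall>i<m. fst s i = snd s i}"
  proof (rule bij_betw_byWitness[where f' = "\<lambda>(\<sigma>, \<sigma>'). (\<sigma>, restrict \<sigma>' {m..<n})"])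
    show "\<forall>s\<in>?F \<times> ?F'. (\<lambda>(\<sigma>, \<sigma>'). (\<sigma>, restrict \<sigma>' {m..<n}))
            ((\<lambda>(\<sigma>, \<rho>). (\<sigma>, \<lambda>i. if i < m then \<sigma> i else \<rho> i)) s) = s"
      by (auto simp: PiE_def extensional_def fun_eq_iff)
    show "\<forall>s\<in>{s \<in> ?F \<times> ?F. \<forall>i<m. fst s i = snd s i}.
            (\<lambda>(\<sigma>, \<rho>). (\<sigma>, \<lambda>i. if i < m then \<sigma> i else \<rho> i))
              ((\<lambda>(\<sigma>, \<sigma>'). (\<sigma>, restrict \<sigma>' {m..<n})) s) = s"
      using mn by (auto simp: PiE_def extensional_def fun_eq_iff)
  qed (use mn in \<open>auto simp: PiE_def Pi_def extensional_def\<close>)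
  then show ?thesis
    by (simp add: bij_betw_same_card[symmetric] card_cartesian_product card_PiE)
qed

lemma expectation_card_rb_solutions_sq_ge:
  assumes km: "k \<le> m" and mn: "m \<le> n" and q: "q \<le> d ^ k"
  defines "a \<equiv> ((real m - real k + 1) / real n) ^ k"
  shows "real d ^ n * real d ^ (n - m) * (a * avoid_prob (d ^ k) 1 q + (1 - a) * avoid_prob (d ^ k) 2 q) ^ t
           \<le> measure_pmf.expectation (instance_pmf n d k q t) (\<lambda>I. real (card (rb_solutions n d t I)) ^ 2)"
proof -
  let ?F = "{..<n} \<rightarrow>\<^sub>E {..<d}" and ?P1 = "avoid_prob (d ^ k) 1 q" and ?P2 = "avoid_prob (d ^ k) 2 q"
  let ?G = "{s \<in> ?F \<times> ?F. \<forall>i<m. fst s i = snd s i}"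
  let ?prob = "\<lambda>s. measure_pmf.prob (instance_pmf n d k q t)
                 {I. \<forall>i<t. satisfies (fst s) (I i) \<and> satisfies (snd s) (I i)}"
  define a' where "a' = card (rb_scopes m k) / card (rb_scopes n k)"
  have "a' \<le> 1"
    unfolding a'_def using card_mono[OF finite_rb_scopes rb_scopes_mono[OF mn]] by (auto simp: divide_le_eq_1)
  moreover have a_le: "a \<le> a'"
    unfolding a_def a'_def by (rule card_rb_scopes_ratio_ge[OF km mn])
  moreover have "0 \<le> a"
    unfolding a_def using km by simp
  ultimately have PL_nonneg: "0 \<le> a * ?P1 + (1 - a) * ?P2"
    by (intro avoid_prob_mix_nonneg) simp_all
  have "(a * ?P1 + (1 - a) * ?P2) ^ t \<le> ?prob s" if s: "s \<in> ?G" for s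
  proof -
    have "a' * ?P1 + (1 - a') * ?P2
        \<le> measure_pmf.prob (constraint_pmf n d k q) {c. satisfies (fst s) c \<and> satisfies (snd s) c}"
      unfolding a'_def using s by (intro prob_satisfies_both_ge km mn q) auto
    then have "a * ?P1 + (1 - a) * ?P2
        \<le> measure_pmf.prob (constraint_pmf n d k q) {c. satisfies (fst s) c \<and> satisfies (snd s) c}"
      using avoid_prob_mix_mono[OF a_le, of "d ^ k" q] by linarith
    then show ?thesis
      using power_mono[OF _ PL_nonneg, of _ t]
        prob_instance_pmf_all[of n d k q t "\<lambda>c. satisfies (fst s) c \<and> satisfies (snd s) c"]
      by simp
  qed
  then have "real (card ?G) * (a * ?P1 + (1 - a) * ?P2) ^ t \<le> (\<Sum>s\<in>?G. ?prob s)"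
    using sum_mono[of ?G "\<lambda>_. (a * ?P1 + (1 - a) * ?P2) ^ t" ?prob] by simp
  also have "\<dots> \<le> (\<Sum>s\<in>?F \<times> ?F. ?prob s)"
    by (rule sum_mono2) (auto simp: finite_PiE)
  also have "\<dots> = measure_pmf.expectation (instance_pmf n d k q t) (\<lambda>I. real (card (rb_solutions n d t I)) ^ 2)"
    unfolding card_rb_solutions_sq_eq_sum by (rule expectation_sum_indicator[symmetric])
  finally show ?thesis
    by (simp add: card_agreeing_pairs[OF mn])
qed

lemma moment_ratio_le_exp:
  assumes km: "k \<le> m" and mn: "m \<le> n" and q: "q \<le> d ^ k" and d: "0 < d"
  defines "a \<equiv> ((real m - real k + 1) / real n) ^ k"
  defines "\<Psi> \<equiv> overlap_factor a (d ^ k) q"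
  assumes \<Psi>: "0 < \<Psi>"
  shows "(measure_pmf.expectation (instance_pmf n d k q t) (\<lambda>I. real (card (rb_solutions n d t I)))) ^ 2
           / measure_pmf.expectation (instance_pmf n d k q t) (\<lambda>I. real (card (rb_solutions n d t I)) ^ 2)
         \<le> exp (real m * ln (real d) - real t * ln \<Psi>)"
proof -
  let ?E2 = "measure_pmf.expectation (instance_pmf n d k q t) (\<lambda>I. real (card (rb_solutions n d t I)) ^ 2)"
  let ?P1 = "avoid_prob (d ^ k) 1 q" and ?P2 = "avoid_prob (d ^ k) 2 q"
  have "?P1 \<noteq> 0"
    using \<Psi> unfolding \<Psi>_def overlap_factor_def by auto
  then have P1: "0 < ?P1"
    by (simp add: avoid_prob_def)
  then have PL: "a * ?P1 + (1 - a) * ?P2 = \<Psi> * ?P1 ^ 2"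
    unfolding \<Psi>_def overlap_factor_def by simp
  have lower: "real d ^ n * real d ^ (n - m) * (\<Psi> * ?P1 ^ 2) ^ t \<le> ?E2"
    using expectation_card_rb_solutions_sq_ge[OF km mn q, of t] unfolding a_def[symmetric] PL .
  have pos: "0 < real d ^ n * real d ^ (n - m) * (\<Psi> * ?P1 ^ 2) ^ t"
    using d P1 \<Psi> by simp
  have "(real d ^ n * ?P1 ^ t) ^ 2 / ?E2
      \<le> (real d ^ n * ?P1 ^ t) ^ 2 / (real d ^ n * real d ^ (n - m) * (\<Psi> * ?P1 ^ 2) ^ t)"
    using lower pos by (intro divide_left_mono) auto
  also have "\<dots> = real d ^ m / \<Psi> ^ t"
  proof -
    have "real d ^ n = real d ^ m * real d ^ (n - m)"
      using mn by (simp flip: power_add)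
    moreover have "(?P1 ^ t) ^ 2 = (?P1 ^ 2) ^ t"
      by (simp flip: power_mult add: mult.commute)
    ultimately show ?thesis
      using d P1 \<Psi> by (simp add: power_mult_distrib power2_eq_square)
  qed
  also have "\<dots> = exp (real m * ln (real d) - real t * ln \<Psi>)"
    using d \<Psi> by (simp add: exp_diff exp_of_nat_mult)
  finally show ?thesis
    using expectation_card_rb_solutions[OF _ q] km mn by simp
qed

lemma filterlim_rb_d_at_top:
  assumes "0 < \<alpha>"
  shows "filterlim (\<lambda>n. real (rb_d n \<alpha>)) at_top sequentially"
proof (rule filterlim_at_top_mono)
  have "filterlim (\<lambda>n::nat. exp (\<alpha> * ln (real n))) at_top sequentially"
    by (rule filterlim_compose[OF exp_at_top filterlim_tendsto_pos_mult_at_top[OF tendsto_const assms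
          filterlim_compose[OF ln_at_top filterlim_real_sequentially]]])
  then show "filterlim (\<lambda>n::nat. -1 + exp (\<alpha> * ln (real n))) at_top sequentially"
    by (rule filterlim_tendsto_add_at_top[OF tendsto_const])
  show "\<forall>\<^sub>F n in sequentially. -1 + exp (\<alpha> * ln (real n)) \<le> real (rb_d n \<alpha>)"
    using eventually_gt_at_top[of "0::nat"]
  proof eventually_elim
    case (elim n)
    have "exp (\<alpha> * ln (real n)) = real n powr \<alpha>" "0 \<le> real n powr \<alpha>"
      using elim by (simp_all add: powr_def)
    then show ?case
      unfolding rb_d_def by linarith
  qed
qed

lemma tendsto_nat_floor_mult_over:
  fixes f :: "'a \<Rightarrow> real"
  assumes f: "filterlim f at_top F" and c: "0 \<le> c"
  shows "((\<lambda>x. real (nat \<lfloor>c * f x\<rfloor>) / f x) \<longlongrightarrow> c) F"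
proof (rule tendsto_sandwich)
  have f_large: "eventually (\<lambda>x. 1 \<le> f x) F"
    using f by (simp add: filterlim_at_top)
  have floor_bounds: "c * f x - 1 \<le> real (nat \<lfloor>c * f x\<rfloor>)" "real (nat \<lfloor>c * f x\<rfloor>) \<le> c * f x"
    if "1 \<le> f x" for x
  proof -
    have "0 \<le> c * f x"
      using c that by simp
    then show "c * f x - 1 \<le> real (nat \<lfloor>c * f x\<rfloor>)" "real (nat \<lfloor>c * f x\<rfloor>) \<le> c * f x"
      by linarith+
  qed
  show "eventually (\<lambda>x. c - 1 / f x \<le> real (nat \<lfloor>c * f x\<rfloor>) / f x) F"
    using f_large
  proof eventually_elim
    case (elim x)
    then have "c - 1 / f x = (c * f x - 1) / f x"
      by (simp add: field_simps)
    with elim show ?case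
      by (simp add: divide_right_mono floor_bounds(1))
  qed
  show "eventually (\<lambda>x. real (nat \<lfloor>c * f x\<rfloor>) / f x \<le> c) F"
    using f_large by eventually_elim (simp add: pos_divide_le_eq floor_bounds(2))
  show "((\<lambda>x. c - 1 / f x) \<longlongrightarrow> c) F"
    using tendsto_diff[OF tendsto_const tendsto_divide_0[OF tendsto_const
        filterlim_at_top_imp_at_infinity[OF f]]] by simp
qed (rule tendsto_const)

lemma avoid_prob_tendsto:
  fixes N q :: "'a \<Rightarrow> nat"
  assumes N: "filterlim (\<lambda>x. real (N x)) at_top F"
    and q: "((\<lambda>x. real (q x) / real (N x)) \<longlongrightarrow> p) F" and p: "p < 1"
  shows "((\<lambda>x. avoid_prob (N x) 1 (q x)) \<longlongrightarrow> 1 - p) F"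
    and "((\<lambda>x. avoid_prob (N x) 2 (q x)) \<longlongrightarrow> (1 - p) ^ 2) F"
proof -
  have "eventually (\<lambda>x. real 2 \<le> real (N x)) F"
    using N unfolding filterlim_at_top by blast
  then have N_large: "eventually (\<lambda>x. 2 \<le> N x) F"
    by (simp only: of_nat_le_iff)
  have "eventually (\<lambda>x. real (q x) / real (N x) < 1) F"
    using order_tendstoD(2)[OF q p] .
  then have q_small: "eventually (\<lambda>x. q x < N x) F"
    using N_large by eventually_elim (simp add: divide_less_eq)
  have inv_N: "((\<lambda>x. 1 / real (N x)) \<longlongrightarrow> 0) F"
    by (rule tendsto_divide_0[OF tendsto_const filterlim_at_top_imp_at_infinity[OF N]])
  have one: "eventually (\<lambda>x. avoid_prob (N x) 1 (q x) = 1 - real (q x) / real (N x)) F"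
    using q_small by eventually_elim (rule avoid_prob_one, simp)
  show lim_one: "((\<lambda>x. avoid_prob (N x) 1 (q x)) \<longlongrightarrow> 1 - p) F"
    by (rule Lim_transform_eventually[OF tendsto_diff[OF tendsto_const q]]) (use one in \<open>simp add: eq_commute\<close>)
  have "avoid_prob (N x) 2 (q x)
          = avoid_prob (N x) 1 (q x) * (1 - (real (q x) / real (N x)) / (1 - 1 / real (N x)))"
    if "q x < N x" "2 \<le> N x" for x
  proof -
    have "real (q x) / real (N x - 1) = (real (q x) / real (N x)) / (1 - 1 / real (N x))"
      using that by (simp add: divide_simps)
    then show ?thesis
      using that avoid_prob_Suc[of "q x" "N x" 1] avoid_prob_one[of "q x" "N x - 1"]
      by (simp add: numeral_2_eq_2)
  qed
  then have "eventually (\<lambda>x. avoid_prob (N x) 2 (q x)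
          = avoid_prob (N x) 1 (q x) * (1 - (real (q x) / real (N x)) / (1 - 1 / real (N x)))) F"
    using q_small N_large by (auto elim: eventually_elim2)
  moreover have "((\<lambda>x. avoid_prob (N x) 1 (q x) * (1 - (real (q x) / real (N x)) / (1 - 1 / real (N x))))
      \<longlongrightarrow> (1 - p) * (1 - p / (1 - 0))) F"
    by (intro tendsto_intros lim_one q inv_N) simp
  ultimately show "((\<lambda>x. avoid_prob (N x) 2 (q x)) \<longlongrightarrow> (1 - p) ^ 2) F"
    by (simp add: power2_eq_square Lim_transform_eventually eventually_mono eq_commute)
qed

lemma filterlim_rb_d_power_at_top:
  assumes "1 \<le> k" "0 < \<alpha>"
  shows "filterlim (\<lambda>n. real (rb_d n \<alpha> ^ k)) at_top sequentially"
  unfolding of_nat_power using assms by (intro filterlim_pow_at_top filterlim_rb_d_at_top) simp_all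

lemma rb_q_ratio_tendsto:
  assumes "1 \<le> k" "0 < \<alpha>" "0 \<le> p"
  shows "((\<lambda>n. real (rb_q n \<alpha> k p) / real (rb_d n \<alpha> ^ k)) \<longlongrightarrow> p) sequentially"
  unfolding rb_q_def
  using tendsto_nat_floor_mult_over[OF filterlim_rb_d_power_at_top[OF assms(1,2)] assms(3)] by simp

lemma filterlim_n_ln_rb_d_at_top:
  assumes "0 < \<alpha>"
  shows "filterlim (\<lambda>n. real n * ln (real (rb_d n \<alpha>))) at_top sequentially"
  by (rule filterlim_at_top_mult_at_top[OF filterlim_real_sequentially
        filterlim_compose[OF ln_at_top filterlim_rb_d_at_top[OF assms]]])

lemma rb_t_ratio_tendsto:
  assumes "0 < \<alpha>" "0 \<le> r"
  shows "((\<lambda>n. real (rb_t n \<alpha> r) / (real n * ln (real (rb_d n \<alpha>)))) \<longlongrightarrow> r) sequentially"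
  unfolding rb_t_def
  using tendsto_nat_floor_mult_over[OF filterlim_n_ln_rb_d_at_top[OF assms(1)] assms(2)]
  by (simp add: mult.assoc)

lemma nat_floor_mult_le:
  assumes "0 \<le> \<epsilon>" "\<epsilon> \<le> 1"
  shows "nat \<lfloor>\<epsilon> * real n\<rfloor> \<le> n"
  using mult_left_le_one_le[of "real n" \<epsilon>] assms by (simp add: nat_le_iff floor_le_iff)

lemma tendsto_kept_fraction:
  assumes "0 \<le> \<epsilon>" "\<epsilon> \<le> 1"
  shows "((\<lambda>n. real (n - nat \<lfloor>\<epsilon> * real n\<rfloor>) / real n) \<longlongrightarrow> 1 - \<epsilon>) sequentially"
proof (rule Lim_transform_eventually)
  show "((\<lambda>n. 1 - real (nat \<lfloor>\<epsilon> * real n\<rfloor>) / real n) \<longlongrightarrow> 1 - \<epsilon>) sequentially"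
    by (intro tendsto_diff tendsto_const tendsto_nat_floor_mult_over filterlim_real_sequentially assms(1))
  show "\<forall>\<^sub>F n in sequentially. 1 - real (nat \<lfloor>\<epsilon> * real n\<rfloor>) / real n
                                  = real (n - nat \<lfloor>\<epsilon> * real n\<rfloor>) / real n"
    using eventually_gt_at_top[of "0::nat"]
    by eventually_elim (simp add: nat_floor_mult_le[OF assms] field_simps)
qed

lemma tendsto_kept_fraction_power:
  assumes "0 \<le> \<epsilon>" "\<epsilon> \<le> 1"
  shows "((\<lambda>n. ((real (n - nat \<lfloor>\<epsilon> * real n\<rfloor>) - real k + 1) / real n) ^ k) \<longlongrightarrow> (1 - \<epsilon>) ^ k)
           sequentially"
proof (rule Lim_transform_eventually)
  show "((\<lambda>n. (real (n - nat \<lfloor>\<epsilon> * real n\<rfloor>) / real n + (1 - real k) / real n) ^ k) \<longlongrightarrow> (1 - \<epsilon>) ^ k)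
          sequentially"
    using tendsto_power[OF tendsto_add[OF tendsto_kept_fraction[OF assms]
          tendsto_divide_0[OF tendsto_const[of "1 - real k"]
            filterlim_at_top_imp_at_infinity[OF filterlim_real_sequentially]]], of k]
    by simp
  show "\<forall>\<^sub>F n in sequentially. (real (n - nat \<lfloor>\<epsilon> * real n\<rfloor>) / real n + (1 - real k) / real n) ^ k
                               = ((real (n - nat \<lfloor>\<epsilon> * real n\<rfloor>) - real k + 1) / real n) ^ k"
    using eventually_gt_at_top[of "0::nat"]
    by eventually_elim (simp add: add_divide_distrib[symmetric] algebra_simps)
qed

lemma eventually_le_kept:
  assumes "0 \<le> \<epsilon>" "\<epsilon> < 1"
  shows "\<forall>\<^sub>F n in sequentially. k \<le> n - nat \<lfloor>\<epsilon> * real n\<rfloor>"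
  using filterlim_real_sequentially unfolding filterlim_at_top
proof (rule allE[of _ "real k / (1 - \<epsilon>)"], elim eventually_mono)
  fix n assume "real k / (1 - \<epsilon>) \<le> real n"
  then have "real k \<le> (1 - \<epsilon>) * real n"
    using assms by (simp add: field_simps)
  also have "\<dots> \<le> real (n - nat \<lfloor>\<epsilon> * real n\<rfloor>)"
    using nat_floor_mult_le[of \<epsilon> n] assms by (simp add: algebra_simps)
  finally show "k \<le> n - nat \<lfloor>\<epsilon> * real n\<rfloor>"
    by simp
qed

lemma overlap_factor_tendsto:
  fixes a :: "'a \<Rightarrow> real" and N q :: "'a \<Rightarrow> nat"
  assumes a: "(a \<longlongrightarrow> A) F" and N: "filterlim (\<lambda>x. real (N x)) at_top F"
    and q: "((\<lambda>x. real (q x) / real (N x)) \<longlongrightarrow> p) F" and p: "p < 1"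
  shows "((\<lambda>x. overlap_factor (a x) (N x) (q x)) \<longlongrightarrow> 1 + (1 / (1 - p) - 1) * A) F"
proof -
  have "(A * u + (1 - A) * u ^ 2) / u ^ 2 = 1 + (1 / u - 1) * A" if "u \<noteq> 0" for u
    using that by (simp add: field_simps power2_eq_square)
  moreover have "((\<lambda>x. overlap_factor (a x) (N x) (q x))
      \<longlongrightarrow> (A * (1 - p) + (1 - A) * (1 - p) ^ 2) / (1 - p) ^ 2) F"
    unfolding overlap_factor_def using p
    by (intro tendsto_intros a avoid_prob_tendsto[OF N q p]) auto
  ultimately show ?thesis
    using p by simp
qed

lemma rb_q_le:
  assumes "p < 1"
  shows "rb_q n \<alpha> k p \<le> rb_d n \<alpha> ^ k"
proof -
  have "p * real (rb_d n \<alpha>) ^ k \<le> 1 * real (rb_d n \<alpha>) ^ k"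
    using assms by (intro mult_right_mono) simp_all
  then show ?thesis
    unfolding rb_q_def by (simp add: nat_le_iff floor_le_iff)
qed

lemma rb_moment_ratio_le_exp:
  assumes km: "k \<le> m" and mn: "m \<le> n" and p: "p < 1" and d: "0 < rb_d n \<alpha>"
  defines "\<Psi> \<equiv> overlap_factor (((real m - real k + 1) / real n) ^ k) (rb_d n \<alpha> ^ k) (rb_q n \<alpha> k p)"
  assumes \<Psi>: "0 < \<Psi>"
  shows "(rb_EX n \<alpha> r k p) ^ 2 / rb_EX2 n \<alpha> r k p
           \<le> exp (real m * ln (real (rb_d n \<alpha>)) - real (rb_t n \<alpha> r) * ln \<Psi>)"
  using \<Psi> unfolding rb_EX_eq_instance_pmf rb_EX2_eq_instance_pmf \<Psi>_def
  by (intro moment_ratio_le_exp km mn rb_q_le p d)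

lemma rb_moment_ratio_nonneg: "0 \<le> (rb_EX n \<alpha> r k p) ^ 2 / rb_EX2 n \<alpha> r k p"
  unfolding rb_EX2_def by simp

lemma exists_eps_ln_gap:
  fixes \<tau> :: real and k :: nat
  assumes \<tau>: "1 < \<tau>" and k: "real k * (\<tau> - 1) < \<tau> * ln \<tau>"
  shows "\<exists>\<epsilon>. 0 < \<epsilon> \<and> \<epsilon> < 1 \<and> (1 - \<epsilon>) * ln \<tau> < ln (1 + (\<tau> - 1) * (1 - \<epsilon>) ^ k)"
proof -
  define f where "f x = ln (1 + (\<tau> - 1) * (1 - x) ^ k) - (1 - x) * ln \<tau>" for x :: real
  have "((\<lambda>x. ln (1 + (\<tau> - 1) * (1 - x) ^ k) - (1 - x) * ln \<tau>) has_real_derivative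
          (\<tau> - 1) * (real k * (1 - 0) ^ (k - 1) * (0 - 1)) / (1 + (\<tau> - 1) * (1 - 0) ^ k) - (0 - 1) * ln \<tau>)
        (at 0)"
    using \<tau> by (auto intro!: derivative_eq_intros)
  then have "(f has_real_derivative (ln \<tau> - real k * (\<tau> - 1) / \<tau>)) (at 0)"
    unfolding f_def by (rule DERIV_cong) (use \<tau> in \<open>simp add: field_simps\<close>)
  moreover have "0 < ln \<tau> - real k * (\<tau> - 1) / \<tau>"
    using k \<tau> by (simp add: field_simps)
  ultimately obtain \<delta> where \<delta>: "0 < \<delta>" "\<And>x. 0 < x \<Longrightarrow> x < \<delta> \<Longrightarrow> f 0 < f (0 + x)"
    using DERIV_pos_inc_right by blast
  define \<epsilon> where "\<epsilon> = min (\<delta> / 2) (1 / 2)"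
  have "0 < \<epsilon>" "\<epsilon> < \<delta>" "\<epsilon> < 1"
    using \<delta> unfolding \<epsilon>_def by auto
  moreover have "f 0 = 0"
    unfolding f_def using \<tau> by simp
  ultimately show ?thesis
    using \<delta>(2)[of \<epsilon>] unfolding f_def by (intro exI[of _ \<epsilon>]) auto
qed

lemma rb_moment_ratio_tendsto_0:
  fixes k :: nat and \<alpha> p \<epsilon> r :: real
  assumes k: "1 \<le> k" and \<alpha>: "0 < \<alpha>" and p: "0 < p" "p < 1" and \<epsilon>: "0 < \<epsilon>" "\<epsilon> < 1" and r: "0 < r"
    and gap: "1 - \<epsilon> < r * ln (1 + (1 / (1 - p) - 1) * (1 - \<epsilon>) ^ k)"
  shows "((\<lambda>n. (rb_EX n \<alpha> r k p) ^ 2 / rb_EX2 n \<alpha> r k p) \<longlongrightarrow> 0) sequentially"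
proof -
  define m where "m n = n - nat \<lfloor>\<epsilon> * real n\<rfloor>" for n
  define \<Psi> where
    "\<Psi> n = overlap_factor (((real (m n) - real k + 1) / real n) ^ k) (rb_d n \<alpha> ^ k) (rb_q n \<alpha> k p)" for n
  define \<Psi>_lim where "\<Psi>_lim = 1 + (1 / (1 - p) - 1) * (1 - \<epsilon>) ^ k"
  define L where "L n = real n * ln (real (rb_d n \<alpha>))" for n
  define B where "B n = real (m n) / real n - real (rb_t n \<alpha> r) / L n * ln (\<Psi> n)" for n
  have \<Psi>_tendsto: "(\<Psi> \<longlongrightarrow> \<Psi>_lim) sequentially"
    unfolding \<Psi>_def[abs_def] \<Psi>_lim_def m_def using k \<alpha> \<epsilon> p
    by (intro overlap_factor_tendsto tendsto_kept_fraction_power filterlim_rb_d_power_at_top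
        rb_q_ratio_tendsto) auto
  have \<Psi>_lim_pos: "0 < \<Psi>_lim"
    unfolding \<Psi>_lim_def using p \<epsilon> by (simp add: add_pos_nonneg)
  have L_lim: "filterlim L at_top sequentially"
    unfolding L_def[abs_def] by (rule filterlim_n_ln_rb_d_at_top[OF \<alpha>])
  have "(B \<longlongrightarrow> (1 - \<epsilon>) - r * ln \<Psi>_lim) sequentially"
    unfolding B_def[abs_def] L_def m_def using \<Psi>_lim_pos \<epsilon> r
    by (intro tendsto_intros tendsto_kept_fraction \<Psi>_tendsto rb_t_ratio_tendsto \<alpha>) auto
  then have exp_lim: "((\<lambda>n. exp (B n * L n)) \<longlongrightarrow> 0) sequentially"
    using gap unfolding \<Psi>_lim_def
    by (intro filterlim_compose[OF exp_at_bot] filterlim_tendsto_neg_mult_at_bot[OF _ _ L_lim]) auto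
  have upper: "\<forall>\<^sub>F n in sequentially. (rb_EX n \<alpha> r k p) ^ 2 / rb_EX2 n \<alpha> r k p \<le> exp (B n * L n)"
    using eventually_gt_at_top[of "0::nat"] eventually_le_kept[OF less_imp_le[OF \<epsilon>(1)] \<epsilon>(2), of k]
      filterlim_rb_d_at_top[OF \<alpha>, unfolded filterlim_at_top, rule_format, of 2]
      order_tendstoD(1)[OF \<Psi>_tendsto \<Psi>_lim_pos]
  proof eventually_elim
    case (elim n)
    have "(rb_EX n \<alpha> r k p) ^ 2 / rb_EX2 n \<alpha> r k p
        \<le> exp (real (m n) * ln (real (rb_d n \<alpha>)) - real (rb_t n \<alpha> r) * ln (\<Psi> n))"
      using elim p unfolding \<Psi>_def m_def by (intro rb_moment_ratio_le_exp) simp_all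
    also have "real (m n) * ln (real (rb_d n \<alpha>)) - real (rb_t n \<alpha> r) * ln (\<Psi> n) = B n * L n"
      using elim unfolding B_def L_def by (simp add: field_simps)
    finally show ?case .
  qed
  have nonneg: "\<forall>\<^sub>F n in sequentially. 0 \<le> (rb_EX n \<alpha> r k p) ^ 2 / rb_EX2 n \<alpha> r k p"
    by (simp add: rb_moment_ratio_nonneg)
  show ?thesis
    by (rule tendsto_sandwich[OF nonneg upper tendsto_const exp_lim])
qed

theorem claim5p3:
  fixes k :: nat and \<alpha> p :: real
  assumes "k \<ge> 2" and "\<alpha> > 0" and "0 < p" and "p < 1"
    and "k < (1 / (1 - p)) * ln (1 / (1 - p)) / (1 / (1 - p) - 1)"
  shows "\<exists>r0. 0 \<le> r0 \<and> r0 < 1 / ln (1 / (1 - p)) \<and>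
           (\<forall>r. r0 < r \<and> r < 1 / ln (1 / (1 - p)) \<longrightarrow>
              ((\<lambda>n. (rb_EX n \<alpha> r k p)^2 / rb_EX2 n \<alpha> r k p) \<longlongrightarrow> 0) sequentially)"
proof -
  define \<tau> where "\<tau> = 1 / (1 - p)"
  have \<tau>: "1 < \<tau>"
    unfolding \<tau>_def using assms(3,4) by simp
  moreover have "real k * (\<tau> - 1) < \<tau> * ln \<tau>"
    using assms(5) \<tau> unfolding \<tau>_def[symmetric] by (simp add: pos_less_divide_eq)
  ultimately obtain \<epsilon> where \<epsilon>: "0 < \<epsilon>" "\<epsilon> < 1" "(1 - \<epsilon>) * ln \<tau> < ln (1 + (\<tau> - 1) * (1 - \<epsilon>) ^ k)"
    using exists_eps_ln_gap by blast
  define r0 where "r0 = (1 - \<epsilon>) / ln (1 + (\<tau> - 1) * (1 - \<epsilon>) ^ k)"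
  have ln_pos: "0 < ln (1 + (\<tau> - 1) * (1 - \<epsilon>) ^ k)"
    using \<epsilon> \<tau> by (simp add: add_pos_nonneg)
  show ?thesis
  proof (intro exI[of _ r0] conjI allI impI)
    show "0 \<le> r0"
      unfolding r0_def using ln_pos \<epsilon> by simp
    show "r0 < 1 / ln (1 / (1 - p))"
      unfolding r0_def \<tau>_def[symmetric] using ln_pos \<tau> \<epsilon>(3) by (simp add: field_simps)
    fix r assume "r0 < r \<and> r < 1 / ln (1 / (1 - p))"
    with ln_pos have gap: "1 - \<epsilon> < r * ln (1 + (1 / (1 - p) - 1) * (1 - \<epsilon>) ^ k)"
      unfolding r0_def \<tau>_def by (simp add: divide_less_eq mult.commute)
    moreover from gap have "0 < r"
      using ln_pos \<epsilon> by (intro zero_less_mult_pos2[of r]) (simp_all add: \<tau>_def)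
    ultimately show "((\<lambda>n. (rb_EX n \<alpha> r k p)^2 / rb_EX2 n \<alpha> r k p) \<longlongrightarrow> 0) sequentially"
      using assms \<epsilon> by (intro rb_moment_ratio_tendsto_0) simp_all
  qed
qed

end
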